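(* Let $n$ be a positive even integer. For $m=1,\dots,n+1$ and $k=1,\dots,\tfrac n2+1$ put $x_m=\cos\frac{m\pi}{n+2}$ and $y_{m,k}=\cos\frac{2k\pi}{n+3}$ if $m$ is odd, $y_{m,k}=\cos\frac{(2k-1)\pi}{n+3}$ if $m$ is even. For non-negative integers $i,j$ let $$I(i,j):=\sum_{m=1}^{n+1}\sum_{k=1}^{\frac n2+1}(1-x_m^2)(1-y_{m,k}^2)\,U_i(x_m)\,U_j(y_{m,k}).$$ If $i$ is such that $n+2$ divides neither $i$ nor $i+2$, or $j$ is such that $n+3$ divides neither $j$ nor $j+2$, then $I(i,j)=0$. In all other cases, with $\mu,\nu$ integers and $C_n=\frac{8}{(n+2)(n+3)}$, $$I(i,j)=\begin{cases}(2C_n)^{-1}[(-1)^\nu+(-1)^\mu], & i=\nu(n+2),\ j=\mu(n+3),\\ -(2C_n)^{-1}[(-1)^\nu+(-1)^\mu], & i=\nu(n+2),\ j=\mu(n+3)-2,\\ -(2C_n)^{-1}[(-1)^\nu+(-1)^\mu], & i=\nu(n+2)-2,\ j=\mu(n+3),\\ (2C_n)^{-1}[(-1)^\nu+(-1)^\mu], & i=\nu(n+2)-2,\ j=\mu(n+3)-2.\end{cases}$$ No upper bound on $i,j$ is required.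
   Context: $U_j$ denotes the Chebyshev polynomial of the second kind of degree $j$, i.e. $U_j(\cos\theta)=\frac{\sin((j+1)\theta)}{\sin\theta}$. *)

theory Defs
  imports Complex_Main
begin

fun chebU :: "nat \<Rightarrow> real \<Rightarrow> real" where
  "chebU 0 x = 1"
| "chebU (Suc 0) x = 2 * x"
| "chebU (Suc (Suc j)) x = 2 * x * chebU (Suc j) x - chebU j x"

definition xnode :: "nat \<Rightarrow> nat \<Rightarrow> real" where
  "xnode n m = cos (real m * pi / real (n + 2))"

definition ynode :: "nat \<Rightarrow> nat \<Rightarrow> nat \<Rightarrow> real" where
  "ynode n m k = (if odd m then cos (2 * real k * pi / real (n + 3))
                  else cos ((2 * real k - 1) * pi / real (n + 3)))"

definition Isum :: "nat \<Rightarrow> nat \<Rightarrow> nat \<Rightarrow> real" where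
  "Isum n i j = (\<Sum>m = 1..n+1. \<Sum>k = 1..n div 2 + 1.
      (1 - (xnode n m)^2) * (1 - (ynode n m k)^2) * chebU i (xnode n m) * chebU j (ynode n m k))"

definition Cn :: "nat \<Rightarrow> real" where
  "Cn n = 8 / (real (n + 2) * real (n + 3))"

end

theory Submission
  imports Defs
begin

text \<open>
  Since \<open>(1 - cos\<^sup>2 t) U\<^sub>j(cos t) = (cos (j t) - cos ((j + 2) t)) / 2\<close>, the double sum
  factorises into one-dimensional sums of cosines over equally spaced nodes. Each of these is
  evaluated by the Dirichlet kernel: it is a multiple of the number of nodes when the frequency is
  a multiple of the period, and a constant otherwise. The \<open>y\<close>-nodes of the even rows are the
  reflections \<open>y \<mapsto> -y\<close> of those of the odd rows, which contributes a sign \<open>(-1)\<^sup>j\<close> on even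
  rows; this sign is absorbed into the \<open>x\<close>-frequency via
  \<open>(-1)\<^sup>j\<^sup>m cos (c m \<pi> / M) = cos ((c + j M) m \<pi> / M)\<close>. The result is the closed form
  \<open>Isum n i j = (n+2)(n+3)/8 \<cdot> (-1)\<^sup>j \<cdot> ([N | j] - [N | j+2]) \<cdot> ([2M | i+jM] - [2M | i+2+jM])\<close>
  with \<open>M = n + 2\<close>, \<open>N = n + 3\<close>, from which all cases are read off.
\<close>

lemma chebU_cos_mult_sin: "chebU j (cos t) * sin t = sin ((real j + 1) * t)"
proof (induction j t rule: chebU.induct)
  case (1 t)
  then show ?case by simp
next
  case (2 t)
  then show ?case by (simp add: sin_double)
next
  case (3 j t)
  have "chebU (Suc (Suc j)) (cos t) * sin t
      = 2 * cos t * (chebU (Suc j) (cos t) * sin t) - chebU j (cos t) * sin t"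
    by (simp add: algebra_simps)
  also have "\<dots> = 2 * cos t * sin ((real j + 2) * t) - sin ((real j + 1) * t)"
    using 3 by (simp add: add.commute)
  also have "\<dots> = sin ((real j + 2) * t + t) + sin ((real j + 2) * t - t)
                    - sin ((real j + 1) * t)"
    by (simp add: sin_add sin_diff)
  also have "\<dots> = sin ((real (Suc (Suc j)) + 1) * t)"
    by (simp add: algebra_simps)
  finally show ?case .
qed

lemma one_minus_cos_squared_mult_chebU:
  "(1 - (cos t)\<^sup>2) * chebU j (cos t) = (cos (real j * t) - cos ((real j + 2) * t)) / 2"
proof -
  have "(1 - (cos t)\<^sup>2) * chebU j (cos t) = sin t * sin ((real j + 1) * t)"
    unfolding cos_squared_eq chebU_cos_mult_sin[symmetric] by (simp add: power2_eq_square)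
  also have "\<dots> = (cos ((real j + 1) * t - t) - cos ((real j + 1) * t + t)) / 2"
    by (simp add: cos_add cos_diff)
  also have "\<dots> = (cos (real j * t) - cos ((real j + 2) * t)) / 2"
    by (simp add: algebra_simps)
  finally show ?thesis .
qed

lemma sin_half_mult_sum_cos:
  "2 * sin (x / 2) * (\<Sum>k=1..h. cos (real k * x)) = sin ((2 * real h + 1) * x / 2) - sin (x / 2)"
proof (induction h)
  case 0
  then show ?case by simp
next
  case (Suc h)
  have "2 * sin (x / 2) * cos (real (Suc h) * x)
      = sin (real (Suc h) * x + x / 2) - sin (real (Suc h) * x - x / 2)"
    by (simp add: sin_add sin_diff)
  also have "\<dots> = sin ((2 * real (Suc h) + 1) * x / 2) - sin ((2 * real h + 1) * x / 2)"
    by (simp add: field_simps)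
  finally show ?case
    using Suc by (simp add: distrib_left)
qed

lemma sum_cos_multiples:
  assumes "sin (x / 2) \<noteq> 0"
  shows "(\<Sum>k=1..h. cos (real k * x)) = (sin ((2 * real h + 1) * x / 2) / sin (x / 2) - 1) / 2"
  using sin_half_mult_sum_cos[of x h] assms by (simp add: field_simps)

lemma sin_pi_fraction_eq_0_iff:
  assumes "N > 0"
  shows "sin (real b * pi / real N) = 0 \<longleftrightarrow> N dvd b"
proof -
  have "sin (real b * pi / real N) = sin (of_int (int b) / of_int (int N) * pi)"
    by simp
  then show ?thesis
    using assms by (simp only: sin_times_pi_eq_0 of_int_div_of_int_in_Ints_iff) simp
qed

lemma sum_cos_odd_nodes:
  assumes N: "N = 2 * h + 1"
  shows "(\<Sum>k=1..h. cos (real b * (2 * real k * pi / real N)))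
       = (real N * of_bool (N dvd b) - 1) / 2"
proof (cases "N dvd b")
  case True
  then obtain q where q: "b = N * q" ..
  have "cos (real b * (2 * real k * pi / real N)) = 1" for k
  proof -
    have "real b * (2 * real k * pi / real N) = 2 * real (k * q) * pi"
      unfolding q using N by (simp add: field_simps)
    then show ?thesis
      by (simp only: cos_2npi)
  qed
  then show ?thesis
    using True N by simp
next
  case False
  define x where "x = 2 * real b * pi / real N"
  have half: "x / 2 = real b * pi / real N"
    by (simp add: x_def)
  have "sin (x / 2) \<noteq> 0"
    unfolding half using False sin_pi_fraction_eq_0_iff[of N b] N by simp
  moreover have "(2 * real h + 1) * x / 2 = real b * pi"
    using N by (simp add: x_def field_simps)
  ultimately have "(\<Sum>k=1..h. cos (real k * x)) = - 1 / 2"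
    using sum_cos_multiples[of x h] by simp
  moreover have "real b * (2 * real k * pi / real N) = real k * x" for k
    by (simp add: x_def field_simps)
  ultimately show ?thesis
    using False by simp
qed

lemma sum_cos_even_nodes:
  assumes N: "N = 2 * h + 1"
  shows "(\<Sum>k=1..h. cos (real b * ((2 * real k - 1) * pi / real N)))
       = (-1) ^ b * (real N * of_bool (N dvd b) - 1) / 2"
proof -
  have "cos (real b * ((2 * real (h + 1 - k) - 1) * pi / real N))
      = (-1) ^ b * cos (real b * (2 * real k * pi / real N))" if "k \<in> {1..h}" for k
  proof -
    have "real b * ((2 * real (h + 1 - k) - 1) * pi / real N)
        = real b * pi - real b * (2 * real k * pi / real N)"
      using that N by (simp add: of_nat_diff field_simps)
    then show ?thesis
      by (simp add: cos_diff)
  qed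
  then have "(\<Sum>k=1..h. cos (real b * ((2 * real k - 1) * pi / real N)))
      = (\<Sum>k=1..h. (-1) ^ b * cos (real b * (2 * real k * pi / real N)))"
    by (subst sum.atLeastAtMost_rev) (simp add: add.commute)
  also have "\<dots> = (-1) ^ b * (\<Sum>k=1..h. cos (real b * (2 * real k * pi / real N)))"
    by (rule sum_distrib_left[symmetric])
  also have "\<dots> = (-1) ^ b * ((real N * of_bool (N dvd b) - 1) / 2)"
    by (simp only: sum_cos_odd_nodes[OF N])
  finally show ?thesis
    by simp
qed

lemma sum_cos_half_period_nodes:
  assumes M: "M > 0"
  shows "(\<Sum>m=1..M-1. cos (real c * (real m * pi / real M)))
       = real M * of_bool (2 * M dvd c) - (1 + (-1) ^ c) / 2"
proof (cases "2 * M dvd c")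
  case True
  then obtain q where q: "c = 2 * M * q" ..
  have "cos (real c * (real m * pi / real M)) = 1" for m
  proof -
    have "real c * (real m * pi / real M) = 2 * real (m * q) * pi"
      unfolding q using M by (simp add: field_simps)
    then show ?thesis
      by (simp only: cos_2npi)
  qed
  moreover have "even c"
    using True by (rule dvd_mult_left)
  ultimately show ?thesis
    using True M by (simp add: of_nat_diff)
next
  case False
  define x where "x = real c * pi / real M"
  have half: "x / 2 = real c * pi / real (2 * M)"
    by (simp add: x_def)
  have "sin (x / 2) \<noteq> 0"
    unfolding half using False sin_pi_fraction_eq_0_iff[of "2 * M" c] M by simp
  moreover have "sin ((2 * real (M - 1) + 1) * x / 2) = - ((-1) ^ c * sin (x / 2))"
  proof -
    have arg: "(2 * real (M - 1) + 1) * x / 2 = real c * pi - x / 2"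
      using M by (simp add: x_def of_nat_diff field_simps)
    show ?thesis
      unfolding arg by (simp add: sin_diff)
  qed
  ultimately have "(\<Sum>m=1..M-1. cos (real m * x)) = - ((-1) ^ c + 1) / 2"
    using sum_cos_multiples[of x "M - 1"] by simp
  moreover have "real c * (real m * pi / real M) = real m * x" for m
    by (simp add: x_def field_simps)
  ultimately show ?thesis
    using False by (simp add: field_simps)
qed

lemma parity_sign_mult_cos:
  assumes "M > 0"
  shows "(if odd m then 1 else (-1) ^ j) * cos (real c * (real m * pi / real M))
       = (-1) ^ j * cos (real (c + j * M) * (real m * pi / real M))"
proof -
  have arg: "real (c + j * M) * (real m * pi / real M)
      = real c * (real m * pi / real M) + real (j * m) * pi"
    using assms by (simp add: field_simps)
  have sign: "(if odd m then 1 else (-1) ^ j) = (-1::real) ^ j * (-1) ^ (j * m)"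
    by (cases "odd m") (auto simp: power_add[symmetric])
  show ?thesis
    unfolding arg sign by (simp only: cos_add cos_npi sin_npi) simp
qed

lemma sum_ynode_row:
  assumes "even n"
  shows "(\<Sum>k=1..n div 2 + 1. (1 - (ynode n m k)\<^sup>2) * chebU j (ynode n m k))
       = (if odd m then 1 else (-1) ^ j) * real (n + 3) / 4
         * (of_bool ((n + 3) dvd j) - of_bool ((n + 3) dvd (j + 2)))"
proof -
  define \<phi> where "\<phi> k = (if odd m then 2 * real k * pi / real (n + 3)
                          else (2 * real k - 1) * pi / real (n + 3))" for k :: nat
  have N: "n + 3 = 2 * (n div 2 + 1) + 1"
    using assms by auto
  have summand: "(1 - (ynode n m k)\<^sup>2) * chebU j (ynode n m k)
      = (cos (real j * \<phi> k) - cos (real (j + 2) * \<phi> k)) / 2" for k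
    unfolding ynode_def \<phi>_def by (simp add: one_minus_cos_squared_mult_chebU add.commute)
  have "(\<Sum>k=1..n div 2 + 1. (1 - (ynode n m k)\<^sup>2) * chebU j (ynode n m k))
      = ((\<Sum>k=1..n div 2 + 1. cos (real j * \<phi> k))
         - (\<Sum>k=1..n div 2 + 1. cos (real (j + 2) * \<phi> k))) / 2"
    unfolding sum_subtractf[symmetric] sum_divide_distrib by (simp only: summand)
  also have "\<dots> = (if odd m then 1 else (-1) ^ j) * real (n + 3) / 4
         * (of_bool ((n + 3) dvd j) - of_bool ((n + 3) dvd (j + 2)))"
  proof (cases "odd m")
    case True
    then have \<phi>: "\<phi> k = 2 * real k * pi / real (n + 3)" for k
      by (simp add: \<phi>_def)
    show ?thesis
      unfolding \<phi> sum_cos_odd_nodes[OF N] using True by (simp add: field_simps)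
  next
    case False
    then have \<phi>: "\<phi> k = (2 * real k - 1) * pi / real (n + 3)" for k
      by (simp add: \<phi>_def)
    show ?thesis
      unfolding \<phi> sum_cos_even_nodes[OF N] using False by (simp add: field_simps)
  qed
  finally show ?thesis .
qed

lemma sum_xnode_signed:
  "(\<Sum>m=1..n+1. (if odd m then 1 else (-1) ^ j) * ((1 - (xnode n m)\<^sup>2) * chebU i (xnode n m)))
     = (-1) ^ j * real (n + 2) / 2
       * (of_bool (2 * (n + 2) dvd i + j * (n + 2))
          - of_bool (2 * (n + 2) dvd i + 2 + j * (n + 2)))"
proof -
  define M where "M = n + 2"
  define \<theta> where "\<theta> m = real m * pi / real M" for m :: nat
  have "M > 0"
    by (simp add: M_def)
  have summand: "(if odd m then 1 else (-1) ^ j) * ((1 - (xnode n m)\<^sup>2) * chebU i (xnode n m))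
      = (-1) ^ j / 2 * (cos (real (i + j * M) * \<theta> m)
                        - cos (real (i + 2 + j * M) * \<theta> m))" for m
  proof -
    have X: "(1 - (xnode n m)\<^sup>2) * chebU i (xnode n m)
        = (cos (real i * \<theta> m) - cos (real (i + 2) * \<theta> m)) / 2"
      unfolding xnode_def \<theta>_def M_def
      by (simp add: one_minus_cos_squared_mult_chebU add.commute)
    have "(if odd m then 1 else (-1) ^ j) * ((1 - (xnode n m)\<^sup>2) * chebU i (xnode n m))
        = ((if odd m then 1 else (-1) ^ j) * cos (real i * \<theta> m)
           - (if odd m then 1 else (-1) ^ j) * cos (real (i + 2) * \<theta> m)) / 2"
      unfolding X times_divide_eq_right right_diff_distrib ..
    then show ?thesis
      unfolding \<theta>_def parity_sign_mult_cos[OF \<open>M > 0\<close>] by (simp add: right_diff_distrib)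
  qed
  have "{1..n+1} = {1..M-1}"
    by (simp add: M_def)
  then have "(\<Sum>m=1..n+1.
        (if odd m then 1 else (-1) ^ j) * ((1 - (xnode n m)\<^sup>2) * chebU i (xnode n m)))
      = (-1) ^ j / 2 * ((\<Sum>m=1..M-1. cos (real (i + j * M) * \<theta> m))
                        - (\<Sum>m=1..M-1. cos (real (i + 2 + j * M) * \<theta> m)))"
    unfolding sum_subtractf[symmetric] sum_distrib_left summand by (rule arg_cong)
  also have "\<dots> = (-1) ^ j * real M / 2
       * (of_bool (2 * M dvd i + j * M) - of_bool (2 * M dvd i + 2 + j * M))"
    unfolding \<theta>_def sum_cos_half_period_nodes[OF \<open>M > 0\<close>] by (simp add: field_simps)
  finally show ?thesis
    by (simp only: M_def)
qed

lemma Isum_closed_form: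
  assumes "even n"
  shows "Isum n i j = real (n + 2) * real (n + 3) / 8 * (-1) ^ j
      * (of_bool ((n + 3) dvd j) - of_bool ((n + 3) dvd (j + 2)))
      * (of_bool (2 * (n + 2) dvd i + j * (n + 2)) - of_bool (2 * (n + 2) dvd i + 2 + j * (n + 2)))"
proof -
  let ?\<sigma> = "\<lambda>m. if odd m then 1 else (-1::real) ^ j"
  let ?X = "\<lambda>m. (1 - (xnode n m)\<^sup>2) * chebU i (xnode n m)"
  let ?P = "of_bool ((n + 3) dvd j) - of_bool ((n + 3) dvd (j + 2)) :: real"
  have "Isum n i j = (\<Sum>m=1..n+1. ?X m
      * (\<Sum>k=1..n div 2 + 1. (1 - (ynode n m k)\<^sup>2) * chebU j (ynode n m k)))"
    unfolding Isum_def sum_distrib_left by (simp add: ac_simps)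
  also have "\<dots> = real (n + 3) / 4 * ?P * (\<Sum>m=1..n+1. ?\<sigma> m * ?X m)"
    unfolding sum_ynode_row[OF assms] sum_distrib_left by (simp add: ac_simps)
  finally show ?thesis
    unfolding sum_xnode_signed by (simp add: field_simps)
qed

lemma Isum_eq_0_off_multiples:
  assumes "even n"
    and "(\<not> (n + 2) dvd i \<and> \<not> (n + 2) dvd (i + 2)) \<or> (\<not> (n + 3) dvd j \<and> \<not> (n + 3) dvd (j + 2))"
  shows "Isum n i j = 0"
proof -
  have "\<not> 2 * (n + 2) dvd i + j * (n + 2) \<and> \<not> 2 * (n + 2) dvd i + 2 + j * (n + 2)"
    if "\<not> (n + 2) dvd i" "\<not> (n + 2) dvd (i + 2)"
    using that by (metis dvd_add_times_triv_right_iff dvd_mult_right)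
  then show ?thesis
    using assms by (auto simp: Isum_closed_form)
qed

lemma of_bool_dvd_diff_at_multiple:
  fixes K M a w :: nat
  assumes "M \<ge> 3" and "a + 2 * of_bool e = w * M"
  shows "of_bool (K * M dvd a) - of_bool (K * M dvd a + 2)
       = (if e then - 1 else 1) * (of_bool (K dvd w) :: real)"
proof -
  have apart: False if "M dvd x" "M dvd x + 2" for x
  proof -
    have "M dvd 2"
      using that by (metis dvd_add_right_iff)
    then show False
      using dvd_imp_le[of M 2] assms(1) by simp
  qed
  have cancel: "K * M dvd w * M \<longleftrightarrow> K dvd w"
    using assms(1) by simp
  show ?thesis
  proof (cases e)
    case True
    then have "a + 2 = w * M"
      using assms(2) by simp
    then have "\<not> K * M dvd a"
      using apart[of a] by (metis dvd_mult_right dvd_triv_right)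
    then show ?thesis
      using True cancel \<open>a + 2 = w * M\<close> by simp
  next
    case False
    then have "a = w * M"
      using assms(2) by simp
    then have "\<not> K * M dvd a + 2"
      using apart[of a] by (metis dvd_mult_right dvd_triv_right)
    then show ?thesis
      using False cancel \<open>a = w * M\<close> by simp
  qed
qed

lemma nonneg_multiplier_of_nat:
  fixes a K :: nat and \<nu> :: int
  assumes "int a = \<nu> * int K" and "K > 0"
  obtains v where "\<nu> = int v" and "a = v * K"
proof -
  have "\<nu> \<ge> 0"
    using assms by (metis of_nat_0_le_iff of_nat_0_less_iff zero_le_mult_iff not_le)
  then obtain v where "\<nu> = int v"
    using nonneg_int_cases by blast
  moreover from this have "a = v * K"
    using assms(1) by (metis of_nat_eq_iff of_nat_mult)
  ultimately show ?thesis
    using that by blast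
qed

lemma Isum_at_node_multiples:
  fixes \<nu> \<mu> :: int
  assumes "n > 0" and "even n"
    and i: "int i = \<nu> * int (n + 2) - 2 * of_bool a"
    and j: "int j = \<mu> * int (n + 3) - 2 * of_bool b"
  shows "Isum n i j
       = (if a = b then 1 else - 1) * inverse (2 * Cn n) * ((-1) powi \<nu> + (-1) powi \<mu>)"
proof -
  obtain v where v: "\<nu> = int v" "i + 2 * of_bool a = v * (n + 2)"
    using nonneg_multiplier_of_nat[of "i + 2 * of_bool a" \<nu> "n + 2"] i by auto
  obtain u where u: "\<mu> = int u" "j + 2 * of_bool b = u * (n + 3)"
    using nonneg_multiplier_of_nat[of "j + 2 * of_bool b" \<mu> "n + 3"] j by auto
  have P: "of_bool ((n + 3) dvd j) - of_bool ((n + 3) dvd (j + 2)) = (if b then - 1 else (1::real))"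
    using of_bool_dvd_diff_at_multiple[of "n + 3" j b u 1] u(2) by simp
  have Q: "of_bool (2 * (n + 2) dvd i + j * (n + 2)) - of_bool (2 * (n + 2) dvd i + 2 + j * (n + 2))
      = (if a then - 1 else 1) * (of_bool (even (v + j)) :: real)"
    using of_bool_dvd_diff_at_multiple[of "n + 2" "i + j * (n + 2)" a "v + j" 2] v(2) assms(1)
    by (simp add: algebra_simps)
  have "even (j + 2 * of_bool b) \<longleftrightarrow> even (u * (n + 3))"
    using u(2) by simp
  then have "even j \<longleftrightarrow> even u"
    using assms(2) by simp
  then have sign: "(-1) ^ v + (-1) ^ u = 2 * ((-1) ^ j * (of_bool (even (v + j)) :: real))"
    by (cases "even v"; cases "even u") auto
  have Cn: "inverse (2 * Cn n) = real (n + 2) * real (n + 3) / 16"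
    by (simp add: Cn_def field_simps)
  show ?thesis
    unfolding Isum_closed_form[OF assms(2)] P Q Cn v(1) u(1) power_int_of_nat sign
    by (cases a; cases b) simp_all
qed

theorem proposition3:
  fixes n i j :: nat
  assumes "n > 0" and "even n"
  shows "((\<not> (n + 2) dvd i \<and> \<not> (n + 2) dvd (i + 2)) \<or>
          (\<not> (n + 3) dvd j \<and> \<not> (n + 3) dvd (j + 2)) \<longrightarrow> Isum n i j = 0)
    \<and> (\<forall>\<nu> \<mu> :: int.
         (int i = \<nu> * int (n + 2) \<and> int j = \<mu> * int (n + 3) \<longrightarrow>
            Isum n i j = inverse (2 * Cn n) * ((-1) powi \<nu> + (-1) powi \<mu>))
       \<and> (int i = \<nu> * int (n + 2) \<and> int j = \<mu> * int (n + 3) - 2 \<longrightarrow>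
            Isum n i j = - inverse (2 * Cn n) * ((-1) powi \<nu> + (-1) powi \<mu>))
       \<and> (int i = \<nu> * int (n + 2) - 2 \<and> int j = \<mu> * int (n + 3) \<longrightarrow>
            Isum n i j = - inverse (2 * Cn n) * ((-1) powi \<nu> + (-1) powi \<mu>))
       \<and> (int i = \<nu> * int (n + 2) - 2 \<and> int j = \<mu> * int (n + 3) - 2 \<longrightarrow>
            Isum n i j = inverse (2 * Cn n) * ((-1) powi \<nu> + (-1) powi \<mu>)))"
proof (intro conjI allI impI)
  show "Isum n i j = 0"
    if "(\<not> (n + 2) dvd i \<and> \<not> (n + 2) dvd (i + 2)) \<or> (\<not> (n + 3) dvd j \<and> \<not> (n + 3) dvd (j + 2))"
    using Isum_eq_0_off_multiples[OF assms(2) that] .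
next
  fix \<nu> \<mu> :: int
  note node_multiples = Isum_at_node_multiples[OF assms, of i \<nu> _ j \<mu>]
  show "Isum n i j = inverse (2 * Cn n) * ((-1) powi \<nu> + (-1) powi \<mu>)"
    if "int i = \<nu> * int (n + 2) \<and> int j = \<mu> * int (n + 3)"
    using that node_multiples[of False False] by simp
  show "Isum n i j = - inverse (2 * Cn n) * ((-1) powi \<nu> + (-1) powi \<mu>)"
    if "int i = \<nu> * int (n + 2) \<and> int j = \<mu> * int (n + 3) - 2"
    using that node_multiples[of False True] by simp
  show "Isum n i j = - inverse (2 * Cn n) * ((-1) powi \<nu> + (-1) powi \<mu>)"
    if "int i = \<nu> * int (n + 2) - 2 \<and> int j = \<mu> * int (n + 3)"
    using that node_multiples[of True False] by simp
  show "Isum n i j = inverse (2 * Cn n) * ((-1) powi \<nu> + (-1) powi \<mu>)"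
    if "int i = \<nu> * int (n + 2) - 2 \<and> int j = \<mu> * int (n + 3) - 2"
    using that node_multiples[of True True] by simp
qed

end
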